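(* For $0<t<\rho_W$ we have $b^0_t=\dfrac{1}{W(t)}$, and for $t\ge\rho_W$ we have $b^0_t=0$.
   Context: $W(x)=\sum_{w\in W}x^{d(w)}$ is the growth series of the Coxeter group $W$, and $\rho_W$ is its radius of convergence ($\rho_W=\infty$ if $W$ is finite). $(W,S)$ is a Coxeter system with word length $d$; for $T\subseteq S$, $W_T$ is the subgroup generated by $T$, and $W_T(x)=\sum_{u\in W_T}x^{d(u)}$. Hecke algebra. For $t>0$, ${\bf C}_t[W]$ has basis $\{\delta_w\}$, inner product $\langle\sum a_w\delta_w,\sum b_w\delta_w\rangle_t=\sum a_w\overline{b_w}t^{d(w)}$, and Hecke $t$-multiplication with $\delta_w\delta_s=\delta_{ws}$ if $d(ws)>d(w)$ and $\delta_w\delta_s=t\delta_{ws}+(t-1)\delta_w$ otherwise. $L^2_t$ is its completion, and $V_t$ is the von Neumann algebra of right Hecke multiplications. The trace of right multiplication by a bounded $b$ is the coefficient of $\delta_1$ in $b$, summed over diagonal entries for matrices. Davis complex. $\Delta$ is a simplex with codimension-one faces labelled by $S$, and $\Delta_T$ is the intersection of the faces labelled by $T$. $\mathcal F=\{T:W_T\text{ finite}\}$. The Davis chamber $D$ is the subcomplex of the barycentric subdivision of $\Delta$ spanned by the barycentres of $\Delta_T$, $T\in\mathcal F$, and $D_T=D\cap\Delta_T$. The Davis complex is $\Sigma=W\times D/\sim$, with $(w,p)\sim(u,p)$ iff $p\in D_T$ and $w^{-1}u\in W_T$ for some $T$. For a simplex $\sigma$, $d(\sigma)=\min\{d(w):\sigma\subseteq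 wD\}$. For $\sigma\subseteq D$, $T(\sigma)$ is the largest $T$ with $\sigma\subseteq D_T$. Weighted cohomology. $L^2_tC^i(\Sigma)$ is the space of $i$-cochains (with $W$-equivariant orientations) square-summable for weight $t^{d(\sigma)}$. The coboundary is $\delta$, with adjoint $\partial^tf(\eta)=\sum_{\sigma\supset\eta}[\eta:\sigma]t^{d(\sigma)-d(\eta)}f(\sigma)$, and $L^2_t\mathcal H^i=\ker\delta\cap\ker\partial^t$. Betti numbers. $b^i_t$ is the trace of the orthogonal projection onto $\Phi(L^2_t\mathcal H^i)$, where $\Phi\colon L^2_tC^i(\Sigma)\to\bigoplus_{\sigma\in D^{(i)}}L^2_t$ has $\sigma$-component $f\mapsto W_{T(\sigma)}(t)^{-1/2}\sum_wf(w\sigma)\delta_w$. *)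

theory Defs
  imports "HOL-Analysis.Analysis" "HOL-Algebra.Multiplicative_Group"
    "HOL-Algebra.Generated_Groups" "HOL-Algebra.Coset"
begin

definition word_eval :: "('a, 'b) monoid_scheme \<Rightarrow> 'a list \<Rightarrow> 'a" where
  "word_eval G ws = foldr (\<lambda>s x. s \<otimes>\<^bsub>G\<^esub> x) ws \<one>\<^bsub>G\<^esub>"

text \<open>The congruence on words over S generated by the Coxeter relators
  (s t)^(m_st), where m_st is the order of s t in G (relators only for finite orders).
  For s = t this gives the relator s s.\<close>
inductive cox_equiv :: "('a, 'b) monoid_scheme \<Rightarrow> 'a set \<Rightarrow> 'a list \<Rightarrow> 'a list \<Rightarrow> bool"
  for G S where
  refl: "cox_equiv G S u u"
| sym: "cox_equiv G S u v \<Longrightarrow> cox_equiv G S v u"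
| trans: "cox_equiv G S u v \<Longrightarrow> cox_equiv G S v w \<Longrightarrow> cox_equiv G S u w"
| rel: "s \<in> S \<Longrightarrow> t \<in> S \<Longrightarrow> group.ord G (s \<otimes>\<^bsub>G\<^esub> t) > 0 \<Longrightarrow>
        cox_equiv G S (u @ concat (replicate (group.ord G (s \<otimes>\<^bsub>G\<^esub> t)) [s, t]) @ v) (u @ v)"

definition coxeter_system :: "('a, 'b) monoid_scheme \<Rightarrow> 'a set \<Rightarrow> bool" where
  "coxeter_system G S \<longleftrightarrow> group G \<and> finite S \<and> S \<noteq> {} \<and> S \<subseteq> carrier G \<and>
     \<one>\<^bsub>G\<^esub> \<notin> S \<and> (\<forall>s\<in>S. s \<otimes>\<^bsub>G\<^esub> s = \<one>\<^bsub>G\<^esub>) \<and>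
     generate G S = carrier G \<and>
     (\<forall>u v. set u \<subseteq> S \<longrightarrow> set v \<subseteq> S \<longrightarrow> word_eval G u = word_eval G v \<longrightarrow> cox_equiv G S u v)"

definition word_len :: "('a, 'b) monoid_scheme \<Rightarrow> 'a set \<Rightarrow> 'a \<Rightarrow> nat" where
  "word_len G S w = (LEAST n. \<exists>ws. set ws \<subseteq> S \<and> length ws = n \<and> word_eval G ws = w)"

definition growth_series :: "('a, 'b) monoid_scheme \<Rightarrow> 'a set \<Rightarrow> real \<Rightarrow> real" where
  "growth_series G S x = infsum (\<lambda>w. x ^ word_len G S w) (carrier G)"

definition growth_radius :: "('a, 'b) monoid_scheme \<Rightarrow> 'a set \<Rightarrow> ereal" where
  "growth_radius G S = conv_radius (\<lambda>n. real (card {w \<in> carrier G. word_len G S w = n}))"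

definition sub_growth :: "('a, 'b) monoid_scheme \<Rightarrow> 'a set \<Rightarrow> 'a set \<Rightarrow> real \<Rightarrow> real" where
  "sub_growth G S T x = infsum (\<lambda>u. x ^ word_len G S u) (generate G T)"

definition spherical :: "('a, 'b) monoid_scheme \<Rightarrow> 'a set \<Rightarrow> 'a set set" where
  "spherical G S = {T. T \<subseteq> S \<and> finite (generate G T)}"

definition wl2 :: "'i set \<Rightarrow> ('i \<Rightarrow> real) \<Rightarrow> ('i \<Rightarrow> complex) set" where
  "wl2 I \<mu> = {g. (\<forall>i. i \<notin> I \<longrightarrow> g i = 0) \<and> (\<lambda>i. (cmod (g i))\<^sup>2 * \<mu> i) summable_on I}"

definition winner :: "'i set \<Rightarrow> ('i \<Rightarrow> real) \<Rightarrow> ('i \<Rightarrow> complex) \<Rightarrow> ('i \<Rightarrow> complex) \<Rightarrow> complex" where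
  "winner I \<mu> g h = infsum (\<lambda>i. g i * cnj (h i) * complex_of_real (\<mu> i)) I"

definition orth_proj :: "'i set \<Rightarrow> ('i \<Rightarrow> real) \<Rightarrow> ('i \<Rightarrow> complex) set \<Rightarrow> ('i \<Rightarrow> complex) \<Rightarrow> ('i \<Rightarrow> complex)" where
  "orth_proj I \<mu> V v = (THE p. p \<in> V \<and> (\<forall>u\<in>V. winner I \<mu> (v - p) u = 0))"

text \<open>Vertices of the Davis complex: a vertex w b_T (b_T the barycentre of Delta_T, T in F)
  is identified with the pair (w W_T, T).\<close>
definition davis_vertices :: "('a, 'b) monoid_scheme \<Rightarrow> 'a set \<Rightarrow> ('a set \<times> 'a set) set" where
  "davis_vertices G S = {(w <#\<^bsub>G\<^esub> generate G T, T) | w T. w \<in> carrier G \<and> T \<in> spherical G S}"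

text \<open>Edges of the Davis complex: w [b_T, b_T'] with T proper subset T', both in F.\<close>
definition davis_edges :: "('a, 'b) monoid_scheme \<Rightarrow> 'a set \<Rightarrow> (('a set \<times> 'a set) \<times> ('a set \<times> 'a set)) set" where
  "davis_edges G S = {((w <#\<^bsub>G\<^esub> generate G T, T), (w <#\<^bsub>G\<^esub> generate G T', T')) | w T T'.
      w \<in> carrier G \<and> T \<in> spherical G S \<and> T' \<in> spherical G S \<and> T \<subset> T'}"

text \<open>d(sigma) = min {d(w). sigma in wD}; for the vertex (C,T) this is the minimal length in C.\<close>
definition vertex_len :: "('a, 'b) monoid_scheme \<Rightarrow> 'a set \<Rightarrow> ('a set \<times> 'a set) \<Rightarrow> nat" where
  "vertex_len G S \<sigma> = (LEAST n. \<exists>w \<in> fst \<sigma>. word_len G S w = n)"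

definition cochain0_weight :: "('a, 'b) monoid_scheme \<Rightarrow> 'a set \<Rightarrow> real \<Rightarrow> ('a set \<times> 'a set) \<Rightarrow> real" where
  "cochain0_weight G S t \<sigma> = t ^ vertex_len G S \<sigma>"

definition coboundary0 :: "('v \<Rightarrow> complex) \<Rightarrow> ('v \<times> 'v) \<Rightarrow> complex" where
  "coboundary0 f e = f (snd e) - f (fst e)"

text \<open>L^2_t H^0 = ker delta intersected with ker partial^t; on 0-cochains partial^t is zero
  (there are no (-1)-simplices), so this is the kernel of delta in L^2_t C^0.\<close>
definition harmonic0 :: "('a, 'b) monoid_scheme \<Rightarrow> 'a set \<Rightarrow> real \<Rightarrow> ('a set \<times> 'a set \<Rightarrow> complex) set" where
  "harmonic0 G S t = {f \<in> wl2 (davis_vertices G S) (cochain0_weight G S t).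
      \<forall>e \<in> davis_edges G S. coboundary0 f e = 0}"

text \<open>Target of Phi: the direct sum over sigma in D^(0) (i.e. T in F) of copies of L^2_t,
  realised as functions on F x W with weight t^d(w).\<close>
definition target_index :: "('a, 'b) monoid_scheme \<Rightarrow> 'a set \<Rightarrow> ('a set \<times> 'a) set" where
  "target_index G S = spherical G S \<times> carrier G"

definition target_weight :: "('a, 'b) monoid_scheme \<Rightarrow> 'a set \<Rightarrow> real \<Rightarrow> ('a set \<times> 'a) \<Rightarrow> real" where
  "target_weight G S t i = t ^ word_len G S (snd i)"

definition Phi0 :: "('a, 'b) monoid_scheme \<Rightarrow> 'a set \<Rightarrow> real \<Rightarrow> ('a set \<times> 'a set \<Rightarrow> complex) \<Rightarrow> ('a set \<times> 'a \<Rightarrow> complex)" where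
  "Phi0 G S t f = (\<lambda>(T, w). if T \<in> spherical G S \<and> w \<in> carrier G
      then complex_of_real (sub_growth G S T t powr (-1/2)) * f (w <#\<^bsub>G\<^esub> generate G T, T)
      else 0)"

definition unit_vec :: "('a, 'b) monoid_scheme \<Rightarrow> 'a set \<Rightarrow> ('a set \<times> 'a \<Rightarrow> complex)" where
  "unit_vec G T = (\<lambda>(T', w). if T' = T \<and> w = \<one>\<^bsub>G\<^esub> then 1 else 0)"

text \<open>b^0_t: trace of the orthogonal projection P onto Phi(L^2_t H^0), i.e. the sum over the
  diagonal entries sigma of the coefficient of delta_1 in the (sigma,sigma) entry, which is
  the inner product of P(delta_1 e_sigma) with delta_1 e_sigma.\<close>
definition betti0 :: "('a, 'b) monoid_scheme \<Rightarrow> 'a set \<Rightarrow> real \<Rightarrow> complex" where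
  "betti0 G S t = (\<Sum>T \<in> spherical G S.
      winner (target_index G S) (target_weight G S t)
        (orth_proj (target_index G S) (target_weight G S t) (Phi0 G S t ` harmonic0 G S t)
           (unit_vec G T))
        (unit_vec G T))"

end

(*
  Harmonic 0-cochains are locally constant, and the Davis complex is connected, so they are
  the constants lying in L^2_t; a constant is in L^2_t iff the growth series W(t) converges.
  Since the sphere sizes of a word metric are submultiplicative, W(t) cannot converge on its
  circle of convergence, so this happens iff t < rho_W. In that case Phi(L^2_t H^0) is the line
  spanned by v = Phi(1), whose T-component is W_T(t)^(-1/2) times the sum of all delta_w, and
  the trace of the projection onto it is
    sum_T |<delta_1 e_T, v>|^2 / |v|^2 = sum_T W_T(t)^(-1) / (sum_T W_T(t)^(-1) * W(t)) = 1/W(t).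
*)

theory Submission
  imports Defs
begin

section \<open>Submultiplicative power series\<close>

lemma submultiplicative_power_le:
  fixes a :: "nat \<Rightarrow> real"
  assumes nonneg: "\<And>n. 0 \<le> a n" and submult: "\<And>m n. a (m + n) \<le> a m * a n"
  shows "a (k * N + r) \<le> a N ^ k * a r"
proof (induction k)
  case (Suc k)
  have "a (Suc k * N + r) = a (N + (k * N + r))"
    by (simp add: algebra_simps)
  also have "\<dots> \<le> a N * a (k * N + r)"
    by (rule submult)
  also have "\<dots> \<le> a N * (a N ^ k * a r)"
    using Suc nonneg by (simp add: mult_left_mono)
  finally show ?case
    by (simp add: algebra_simps)
qed simp

lemma summableI_block_geometric:
  fixes f :: "nat \<Rightarrow> real"
  assumes nonneg: "\<And>n. 0 \<le> f n" and "0 < N" and "0 \<le> q" "q < 1"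
    and decay: "\<And>k r. r < N \<Longrightarrow> f (k * N + r) \<le> q ^ k * f r"
  shows "summable f"
proof (rule summableI_nonneg_bounded)
  define B where "B = (\<Sum>r<N. f r)"
  have block: "(\<Sum>i\<in>{k * N..<k * N + N}. f i) \<le> q ^ k * B" for k
  proof -
    have "(\<Sum>i\<in>{k * N..<k * N + N}. f i) = (\<Sum>r<N. f (k * N + r))"
      using sum.atLeastLessThan_shift_0[of f "k * N" "k * N + N"]
      by (simp add: atLeast0LessThan o_def)
    also have "\<dots> \<le> (\<Sum>r<N. q ^ k * f r)"
      by (intro sum_mono decay) simp
    finally show ?thesis
      by (simp add: B_def sum_distrib_left)
  qed
  fix n
  have "(\<Sum>i<n. f i) \<le> (\<Sum>i<n * N. f i)"
    using \<open>0 < N\<close> by (intro sum_mono2 nonneg) auto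
  also have "\<dots> = (\<Sum>k<n. \<Sum>i\<in>{k * N..<k * N + N}. f i)"
    by (simp add: sum.nat_group)
  also have "\<dots> \<le> (\<Sum>k<n. q ^ k) * B"
    unfolding sum_distrib_right by (intro sum_mono block)
  also have "\<dots> \<le> (\<Sum>k. q ^ k) * B"
    using \<open>0 \<le> q\<close> \<open>q < 1\<close>
    by (intro mult_right_mono sum_le_suminf summable_geometric) (auto simp: B_def nonneg sum_nonneg)
  finally show "(\<Sum>i<n. f i) \<le> (\<Sum>k. q ^ k) * B" .
qed (rule nonneg)

text \<open>A submultiplicative sequence cannot converge on its circle of convergence: once
  \<open>a N t^N < 1/2\<close>, the blocks of length \<open>N\<close> decay geometrically even at a slightly
  larger radius.\<close>

lemma submultiplicative_summable_imp_less_conv_radius: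
  fixes a :: "nat \<Rightarrow> real"
  assumes nonneg: "\<And>n. 0 \<le> a n" and submult: "\<And>m n. a (m + n) \<le> a m * a n"
    and "0 < t" and summable: "summable (\<lambda>n. a n * t ^ n)"
  shows "ereal t < conv_radius a"
proof -
  have "eventually (\<lambda>n. a n * t ^ n < 1/2) sequentially"
    using summable_LIMSEQ_zero[OF summable] by (rule order_tendstoD) simp
  then obtain M where "\<And>n. n \<ge> M \<Longrightarrow> a n * t ^ n < 1/2"
    by (auto simp: eventually_sequentially)
  then obtain N where "0 < N" and small: "a N * t ^ N < 1/2"
    by (metis le_add2 plus_1_eq_Suc zero_less_Suc)
  define l where "l = root N (3/2)"
  have "1 < l" and l_pow: "l ^ N = 3/2"
    using \<open>0 < N\<close> by (auto simp: l_def)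
  define x where "x = t * l"
  have "t < x" "0 < x"
    using \<open>1 < l\<close> \<open>0 < t\<close> by (auto simp: x_def)
  have ratio: "a N * x ^ N \<le> 3/4"
    using small by (simp add: x_def power_mult_distrib l_pow)
  have "summable (\<lambda>n. a n * x ^ n)"
  proof (rule summableI_block_geometric[where N = N and q = "3/4"])
    fix k r
    have "a (k * N + r) * x ^ (k * N + r) = a (k * N + r) * ((x ^ N) ^ k * x ^ r)"
      by (metis power_add power_mult mult.commute)
    also have "\<dots> \<le> (a N ^ k * a r) * ((x ^ N) ^ k * x ^ r)"
      using \<open>0 < x\<close> by (intro mult_right_mono submultiplicative_power_le[where a = a, OF nonneg submult]) simp
    also have "\<dots> = (a N * x ^ N) ^ k * (a r * x ^ r)"
      by (simp add: algebra_simps)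
    also have "\<dots> \<le> (3/4) ^ k * (a r * x ^ r)"
      using ratio nonneg \<open>0 < x\<close> by (intro mult_right_mono power_mono) auto
    finally show "a (k * N + r) * x ^ (k * N + r) \<le> (3/4) ^ k * (a r * x ^ r)" .
  qed (use nonneg \<open>0 < x\<close> \<open>0 < N\<close> in auto)
  then have "ereal x \<le> conv_radius a"
    using conv_radius_geI \<open>0 < x\<close> by fastforce
  have "ereal t < ereal x"
    using \<open>t < x\<close> by simp
  also have "\<dots> \<le> conv_radius a"
    by fact
  finally show ?thesis .
qed

lemma submultiplicative_summable_iff_less_conv_radius:
  fixes a :: "nat \<Rightarrow> real"
  assumes "\<And>n. 0 \<le> a n" and "\<And>m n. a (m + n) \<le> a m * a n" and "0 < t"
  shows "summable (\<lambda>n. a n * t ^ n) \<longleftrightarrow> ereal t < conv_radius a"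
proof
  assume "ereal t < conv_radius a"
  then show "summable (\<lambda>n. a n * t ^ n)"
    using summable_in_conv_radius[of t a] \<open>0 < t\<close> by simp
qed (rule submultiplicative_summable_imp_less_conv_radius[where a = a, OF assms])

section \<open>Orthogonal projections in weighted \<open>\<ell>\<^sup>2\<close> spaces\<close>

lemma has_sum_Times_finite:
  fixes h :: "'x \<times> 'y \<Rightarrow> 'c::topological_comm_monoid_add"
  assumes "finite A" and "\<And>x. x \<in> A \<Longrightarrow> ((\<lambda>y. h (x, y)) has_sum g x) B"
  shows "(h has_sum (\<Sum>x\<in>A. g x)) (A \<times> B)"
proof -
  have "(h has_sum g x) (Pair x ` B)" if "x \<in> A" for x
    using assms(2)[OF that] by (subst has_sum_reindex) (auto simp: inj_on_def o_def)
  then have "(h has_sum (\<Sum>x\<in>A. g x)) (\<Union>x\<in>A. Pair x ` B)"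
    by (intro sum_has_sum assms(1)) auto
  moreover have "(\<Union>x\<in>A. Pair x ` B) = A \<times> B"
    by auto
  ultimately show ?thesis
    by simp
qed

lemma orth_proj_line:
  fixes e v :: "'i \<Rightarrow> complex" and \<mu> :: "'i \<Rightarrow> real"
  assumes ev: "((\<lambda>i. e i * cnj (v i) * of_real (\<mu> i)) has_sum \<alpha>) I"
    and vv: "((\<lambda>i. v i * cnj (v i) * of_real (\<mu> i)) has_sum \<beta>) I" and "\<beta> \<noteq> 0"
  shows "orth_proj I \<mu> (range (\<lambda>c i. c * v i)) e = (\<lambda>i. \<alpha> / \<beta> * v i)"
proof -
  have inner: "winner I \<mu> (e - (\<lambda>i. b * v i)) (\<lambda>i. c * v i) = cnj c * (\<alpha> - b * \<beta>)" for b c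
  proof -
    have "((\<lambda>i. cnj c * (e i * cnj (v i) * of_real (\<mu> i)) + - (cnj c * b) * (v i * cnj (v i) * of_real (\<mu> i)))
        has_sum (cnj c * \<alpha> + - (cnj c * b) * \<beta>)) I"
      by (intro has_sum_add has_sum_cmult_right ev vv)
    then have "((\<lambda>i. (e - (\<lambda>i. b * v i)) i * cnj (c * v i) * of_real (\<mu> i))
        has_sum (cnj c * \<alpha> + - (cnj c * b) * \<beta>)) I"
      by (rule has_sum_cong[THEN iffD1, rotated]) (simp add: algebra_simps fun_diff_def)
    then have "winner I \<mu> (e - (\<lambda>i. b * v i)) (\<lambda>i. c * v i) = cnj c * \<alpha> + - (cnj c * b) * \<beta>"
      unfolding winner_def by (rule infsumI)
    then show ?thesis
      by (simp add: algebra_simps)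
  qed
  show ?thesis
    unfolding orth_proj_def
  proof (rule the_equality)
    have "winner I \<mu> (e - (\<lambda>i. \<alpha> / \<beta> * v i)) (\<lambda>i. c * v i) = 0" for c
      unfolding inner using \<open>\<beta> \<noteq> 0\<close> by simp
    then show "(\<lambda>i. \<alpha> / \<beta> * v i) \<in> range (\<lambda>c i. c * v i) \<and>
        (\<forall>u\<in>range (\<lambda>c i. c * v i). winner I \<mu> (e - (\<lambda>i. \<alpha> / \<beta> * v i)) u = 0)"
      by blast
  next
    fix p assume p: "p \<in> range (\<lambda>c i. c * v i) \<and>
        (\<forall>u\<in>range (\<lambda>c i. c * v i). winner I \<mu> (e - p) u = 0)"
    then obtain b where b: "p = (\<lambda>i. b * v i)"
      by blast
    have "winner I \<mu> (e - (\<lambda>i. b * v i)) (\<lambda>i. 1 * v i) = 0"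
      using p unfolding b by blast
    then have "\<alpha> - b * \<beta> = 0"
      unfolding inner by simp
    then show "p = (\<lambda>i. \<alpha> / \<beta> * v i)"
      using \<open>\<beta> \<noteq> 0\<close> b by (simp add: field_simps)
  qed
qed

lemma orth_proj_zero_space: "orth_proj I \<mu> {\<lambda>i. 0} e = (\<lambda>i. 0)"
  unfolding orth_proj_def by (rule the_equality) (auto simp: winner_def)

section \<open>Word length and growth\<close>

lemma word_eval_Nil [simp]: "word_eval G [] = \<one>\<^bsub>G\<^esub>"
  by (simp add: word_eval_def)

lemma word_eval_Cons [simp]: "word_eval G (s # ws) = s \<otimes>\<^bsub>G\<^esub> word_eval G ws"
  by (simp add: word_eval_def)

lemma (in monoid) word_eval_closed: "set ws \<subseteq> carrier G \<Longrightarrow> word_eval G ws \<in> carrier G"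
  by (induction ws) auto

lemma (in monoid) word_eval_append:
  "set xs \<subseteq> carrier G \<Longrightarrow> set ys \<subseteq> carrier G \<Longrightarrow>
    word_eval G (xs @ ys) = word_eval G xs \<otimes> word_eval G ys"
  by (induction xs) (auto simp: word_eval_closed m_assoc)

lemma word_len_le_length: "set ws \<subseteq> S \<Longrightarrow> word_len G S (word_eval G ws) \<le> length ws"
  unfolding word_len_def by (rule Least_le) blast

lemma word_len_one [simp]: "word_len G S \<one>\<^bsub>G\<^esub> = 0"
  using word_len_le_length[of "[]" S G] by simp

definition word_sphere :: "('a, 'b) monoid_scheme \<Rightarrow> 'a set \<Rightarrow> nat \<Rightarrow> 'a set" where
  "word_sphere G S n = {w \<in> carrier G. word_len G S w = n}"

lemma growth_radius_eq: "growth_radius G S = conv_radius (\<lambda>n. real (card (word_sphere G S n)))"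
  by (simp add: growth_radius_def word_sphere_def)

locale involution_generated_group = group G for G :: "('a, 'b) monoid_scheme" (structure) +
  fixes S :: "'a set"
  assumes finite_gens: "finite S" and gens_closed: "S \<subseteq> carrier G"
    and gens_involution: "\<And>s. s \<in> S \<Longrightarrow> s \<otimes> s = \<one>"
    and generate_gens: "generate G S = carrier G"
begin

abbreviation d :: "'a \<Rightarrow> nat" where "d \<equiv> word_len G S"

lemma words_closed: "set ws \<subseteq> S \<Longrightarrow> word_eval G ws \<in> carrier G"
  using gens_closed by (meson word_eval_closed order_trans)

lemma inv_gen: "s \<in> S \<Longrightarrow> inv s = s"
  using gens_involution gens_closed by (meson inv_equality subsetD)

lemma exists_word: "w \<in> carrier G \<Longrightarrow> \<exists>ws. set ws \<subseteq> S \<and> word_eval G ws = w"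
  unfolding generate_gens[symmetric]
proof (induction rule: generate.induct)
  case one
  show ?case by (intro exI[of _ "[]"]) simp
next
  case (incl h)
  then show ?case using gens_closed by (intro exI[of _ "[h]"]) auto
next
  case (inv h)
  then show ?case using gens_closed inv_gen by (intro exI[of _ "[h]"]) auto
next
  case (eng h1 h2)
  then obtain xs ys where "set xs \<subseteq> S" "word_eval G xs = h1" "set ys \<subseteq> S" "word_eval G ys = h2"
    by blast
  then show ?case
    using gens_closed by (intro exI[of _ "xs @ ys"]) (auto simp: word_eval_append)
qed

lemma exists_geodesic:
  assumes "w \<in> carrier G"
  shows "\<exists>ws. set ws \<subseteq> S \<and> length ws = d w \<and> word_eval G ws = w"
proof -
  have "\<exists>n ws. set ws \<subseteq> S \<and> length ws = n \<and> word_eval G ws = w"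
    using exists_word[OF assms] by blast
  then show ?thesis
    unfolding word_len_def by (rule LeastI_ex)
qed

lemma word_len_mult_le:
  assumes "u \<in> carrier G" "v \<in> carrier G"
  shows "d (u \<otimes> v) \<le> d u + d v"
proof -
  obtain us where us: "set us \<subseteq> S" "length us = d u" "word_eval G us = u"
    using exists_geodesic[OF assms(1)] by blast
  obtain vs where vs: "set vs \<subseteq> S" "length vs = d v" "word_eval G vs = v"
    using exists_geodesic[OF assms(2)] by blast
  have "d (u \<otimes> v) = d (word_eval G (us @ vs))"
    using us vs gens_closed by (simp add: word_eval_append subset_trans)
  also have "\<dots> \<le> length (us @ vs)"
    using us vs by (intro word_len_le_length) simp
  finally show ?thesis
    using us vs by simp
qed

lemma geodesic_split:
  assumes "set xs \<subseteq> S" "set ys \<subseteq> S" and "d (word_eval G (xs @ ys)) = length xs + length ys"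
  shows "d (word_eval G xs) = length xs" "d (word_eval G ys) = length ys"
proof -
  have "d (word_eval G (xs @ ys)) \<le> d (word_eval G xs) + d (word_eval G ys)"
    using assms(1,2) gens_closed
    by (simp add: word_eval_append subset_trans word_len_mult_le words_closed)
  moreover have "d (word_eval G xs) \<le> length xs" "d (word_eval G ys) \<le> length ys"
    using assms(1,2) by (simp_all add: word_len_le_length)
  ultimately show "d (word_eval G xs) = length xs" "d (word_eval G ys) = length ys"
    using assms(3) by linarith+
qed

lemma finite_word_sphere: "finite (word_sphere G S n)"
proof (rule finite_surj[OF finite_lists_length_eq[OF finite_gens]])
  show "word_sphere G S n \<subseteq> word_eval G ` {ws. set ws \<subseteq> S \<and> length ws = n}"
    using exists_geodesic unfolding word_sphere_def by fastforce
qed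

lemma word_sphere_add_subset:
  "word_sphere G S (m + n) \<subseteq> (\<lambda>(u, v). u \<otimes> v) ` (word_sphere G S m \<times> word_sphere G S n)"
proof
  fix w assume w: "w \<in> word_sphere G S (m + n)"
  then obtain ws where ws: "set ws \<subseteq> S" "length ws = m + n" "word_eval G ws = w"
    using exists_geodesic unfolding word_sphere_def by force
  define xs ys where "xs = take m ws" and "ys = drop m ws"
  have split: "ws = xs @ ys" and xs: "set xs \<subseteq> S" "length xs = m" and ys: "set ys \<subseteq> S" "length ys = n"
    using ws(1,2) set_take_subset set_drop_subset unfolding xs_def ys_def by fastforce+
  have "d (word_eval G (xs @ ys)) = length xs + length ys"
    using w ws xs ys split by (simp add: word_sphere_def)
  then have "word_eval G xs \<in> word_sphere G S m" "word_eval G ys \<in> word_sphere G S n"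
    using geodesic_split[OF xs(1) ys(1)] xs ys words_closed by (simp_all add: word_sphere_def)
  moreover have "w = word_eval G xs \<otimes> word_eval G ys"
    using ws(3) split xs(1) ys(1) gens_closed by (simp add: word_eval_append subset_trans)
  ultimately show "w \<in> (\<lambda>(u, v). u \<otimes> v) ` (word_sphere G S m \<times> word_sphere G S n)"
    by (intro image_eqI[of _ _ "(word_eval G xs, word_eval G ys)"]) simp_all
qed

lemma card_word_sphere_add_le:
  "card (word_sphere G S (m + n)) \<le> card (word_sphere G S m) * card (word_sphere G S n)"
proof -
  have "card (word_sphere G S (m + n))
      \<le> card ((\<lambda>(u, v). u \<otimes> v) ` (word_sphere G S m \<times> word_sphere G S n))"
    by (intro card_mono word_sphere_add_subset finite_imageI finite_cartesian_product finite_word_sphere)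
  also have "\<dots> \<le> card (word_sphere G S m \<times> word_sphere G S n)"
    by (intro card_image_le finite_cartesian_product finite_word_sphere)
  finally show ?thesis
    by (simp add: card_cartesian_product)
qed

lemma summable_on_growth_iff:
  assumes "0 \<le> t"
  shows "(\<lambda>w. t ^ d w) summable_on carrier G \<longleftrightarrow>
    summable (\<lambda>n. real (card (word_sphere G S n)) * t ^ n)"
proof -
  have "carrier G = (\<Union>n. word_sphere G S n)"
    by (auto simp: word_sphere_def)
  moreover have "(\<lambda>w. t ^ d w) summable_on (\<Union>n. word_sphere G S n) \<longleftrightarrow>
      (\<lambda>n. real (card (word_sphere G S n)) * t ^ n) summable_on UNIV"
    using assms finite_word_sphere
    by (intro summable_on_Union_iff has_sum_finiteI) (auto simp: disjoint_family_on_def word_sphere_def)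
  ultimately have "(\<lambda>w. t ^ d w) summable_on carrier G \<longleftrightarrow>
      (\<lambda>n. real (card (word_sphere G S n)) * t ^ n) summable_on UNIV"
    by simp
  also have "\<dots> \<longleftrightarrow> summable (\<lambda>n. real (card (word_sphere G S n)) * t ^ n)"
    using assms by (intro summable_on_UNIV_nonneg_real_iff) simp
  finally show ?thesis .
qed

lemma summable_on_growth_iff_less_radius:
  assumes "0 < t"
  shows "(\<lambda>w. t ^ d w) summable_on carrier G \<longleftrightarrow> ereal t < growth_radius G S"
  unfolding summable_on_growth_iff[OF less_imp_le[OF assms]] growth_radius_eq
  using card_word_sphere_add_le assms
  by (intro submultiplicative_summable_iff_less_conv_radius) (simp_all add: of_nat_mult[symmetric] del: of_nat_mult)

lemma growth_series_ge_one:
  assumes "0 \<le> t" and "(\<lambda>w. t ^ d w) summable_on carrier G"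
  shows "1 \<le> growth_series G S t"
  using finite_sum_le_infsum[OF assms(2), of "{\<one>}"] assms(1)
  by (simp add: growth_series_def)

end

section \<open>Harmonic 0-cochains on the Davis complex\<close>

definition const_cochain0 :: "('a, 'b) monoid_scheme \<Rightarrow> 'a set \<Rightarrow> complex \<Rightarrow> 'a set \<times> 'a set \<Rightarrow> complex"
  where "const_cochain0 G S c \<sigma> = (if \<sigma> \<in> davis_vertices G S then c else 0)"

context involution_generated_group
begin

lemma generate_gen: "s \<in> S \<Longrightarrow> generate G {s} = {\<one>, s}"
proof
  assume s: "s \<in> S"
  show "generate G {s} \<subseteq> {\<one>, s}"
  proof
    fix x assume "x \<in> generate G {s}"
    then show "x \<in> {\<one>, s}"
    proof (induction rule: generate.induct)
      case (inv h)
      then show ?case using s inv_gen by auto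
    next
      case (eng h1 h2)
      then show ?case using s gens_involution gens_closed by auto
    qed auto
  qed
  show "{\<one>, s} \<subseteq> generate G {s}"
    by (auto intro: generate.one generate.incl)
qed

lemma spherical_empty: "{} \<in> spherical G S"
  by (simp add: spherical_def generate_empty)

lemma spherical_gen: "s \<in> S \<Longrightarrow> {s} \<in> spherical G S"
  by (simp add: spherical_def generate_gen)

lemma finite_spherical: "finite (spherical G S)"
proof (rule finite_subset)
  show "spherical G S \<subseteq> Pow S"
    by (auto simp: spherical_def)
qed (simp add: finite_gens)

lemma subgroup_generate_spherical: "T \<in> spherical G S \<Longrightarrow> subgroup (generate G T) G"
  using gens_closed by (intro generate_is_subgroup) (auto simp: spherical_def)

lemma l_coset_generate_empty: "w \<in> carrier G \<Longrightarrow> w <#\<^bsub>G\<^esub> generate G {} = {w}"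
  by (simp add: generate_empty l_coset_def)

lemma davis_vertices_iff:
  "\<sigma> \<in> davis_vertices G S \<longleftrightarrow>
    (\<exists>w T. w \<in> carrier G \<and> T \<in> spherical G S \<and> \<sigma> = (w <#\<^bsub>G\<^esub> generate G T, T))"
  unfolding davis_vertices_def by blast

lemma harmonic0_vertex_eq_chamber:
  assumes f: "f \<in> harmonic0 G S t" and w: "w \<in> carrier G" and T: "T \<in> spherical G S"
  shows "f (w <#\<^bsub>G\<^esub> generate G T, T) = f ({w}, {})"
proof (cases "T = {}")
  case True
  then show ?thesis
    using w by (simp add: l_coset_generate_empty)
next
  case False
  then have "((w <#\<^bsub>G\<^esub> generate G {}, {}), (w <#\<^bsub>G\<^esub> generate G T, T)) \<in> davis_edges G S"
    unfolding davis_edges_def using w T spherical_empty by blast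
  then show ?thesis
    using f w by (auto simp: harmonic0_def coboundary0_def l_coset_generate_empty)
qed

text \<open>Both chamber vertices are joined to the vertex of the coset \<open>w W_{s} = (w s) W_{s}\<close>.\<close>

lemma harmonic0_chamber_mult_gen:
  assumes f: "f \<in> harmonic0 G S t" and w: "w \<in> carrier G" and s: "s \<in> S"
  shows "f ({w \<otimes> s}, {}) = f ({w}, {})"
proof -
  have "w \<otimes> s \<in> w <#\<^bsub>G\<^esub> generate G {s}"
    unfolding l_coset_def by (auto intro: generate.incl)
  then have coset: "w <#\<^bsub>G\<^esub> generate G {s} = (w \<otimes> s) <#\<^bsub>G\<^esub> generate G {s}"
    using w s by (intro l_repr_independence subgroup_generate_spherical spherical_gen)
  have "w \<otimes> s \<in> carrier G"
    using w s gens_closed by auto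
  then have "f ({w \<otimes> s}, {}) = f ((w \<otimes> s) <#\<^bsub>G\<^esub> generate G {s}, {s})"
    using harmonic0_vertex_eq_chamber[OF f _ spherical_gen[OF s]] by simp
  also have "\<dots> = f (w <#\<^bsub>G\<^esub> generate G {s}, {s})"
    by (simp only: coset)
  also have "\<dots> = f ({w}, {})"
    using harmonic0_vertex_eq_chamber[OF f w spherical_gen[OF s]] .
  finally show ?thesis .
qed

lemma harmonic0_chamber_eq_one:
  assumes f: "f \<in> harmonic0 G S t" and w: "w \<in> carrier G"
  shows "f ({w}, {}) = f ({\<one>}, {})"
proof -
  have along_word: "f ({x \<otimes> word_eval G ws}, {}) = f ({x}, {})"
    if "set ws \<subseteq> S" "x \<in> carrier G" for ws x
    using that
  proof (induction ws arbitrary: x)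
    case (Cons s ws)
    then have "s \<in> carrier G" "x \<otimes> s \<in> carrier G"
      using gens_closed by auto
    moreover have "x \<otimes> word_eval G (s # ws) = (x \<otimes> s) \<otimes> word_eval G ws"
      using Cons.prems \<open>s \<in> carrier G\<close> words_closed by (simp add: m_assoc)
    ultimately show ?case
      using Cons harmonic0_chamber_mult_gen[OF f] by simp
  qed simp
  obtain ws where "set ws \<subseteq> S" "word_eval G ws = w"
    using exists_word[OF w] by blast
  then show ?thesis
    using along_word[of ws \<one>] w by simp
qed

lemma harmonic0_const:
  assumes f: "f \<in> harmonic0 G S t"
  shows "f = const_cochain0 G S (f ({\<one>}, {}))"
proof
  fix \<sigma>
  show "f \<sigma> = const_cochain0 G S (f ({\<one>}, {})) \<sigma>"
  proof (cases "\<sigma> \<in> davis_vertices G S")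
    case True
    then obtain w T where w: "w \<in> carrier G" and "T \<in> spherical G S"
      and "\<sigma> = (w <#\<^bsub>G\<^esub> generate G T, T)"
      using davis_vertices_iff by blast
    then have "f \<sigma> = f ({w}, {})"
      using harmonic0_vertex_eq_chamber[OF f] by simp
    also have "\<dots> = f ({\<one>}, {})"
      using harmonic0_chamber_eq_one[OF f w] .
    finally show ?thesis
      using True by (simp add: const_cochain0_def)
  next
    case False
    then show ?thesis
      using f by (cases \<sigma>) (auto simp: const_cochain0_def harmonic0_def wl2_def)
  qed
qed

lemma vertex_len_chamber: "w \<in> carrier G \<Longrightarrow> vertex_len G S ({w}, T) = d w"
  unfolding vertex_len_def by (rule Least_equality) auto

lemma davis_vertex_min_rep:
  assumes "\<sigma> \<in> davis_vertices G S"
  shows "\<exists>u \<in> carrier G. fst \<sigma> = u <#\<^bsub>G\<^esub> generate G (snd \<sigma>) \<and> d u = vertex_len G S \<sigma>"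
proof -
  obtain w T where w: "w \<in> carrier G" and T: "T \<in> spherical G S" and \<sigma>: "\<sigma> = (w <#\<^bsub>G\<^esub> generate G T, T)"
    using assms davis_vertices_iff by blast
  have "w \<otimes> \<one> \<in> w <#\<^bsub>G\<^esub> generate G T"
    unfolding l_coset_def by (blast intro: generate.one)
  then have "w \<in> fst \<sigma>"
    using \<sigma> w by simp
  then have "\<exists>n. \<exists>u \<in> fst \<sigma>. d u = n"
    by blast
  then have "\<exists>u \<in> fst \<sigma>. d u = vertex_len G S \<sigma>"
    unfolding vertex_len_def by (rule LeastI_ex)
  then obtain u where u: "u \<in> fst \<sigma>" "d u = vertex_len G S \<sigma>"
    by blast
  have "generate G T \<subseteq> carrier G"
    using subgroup.subset[OF subgroup_generate_spherical[OF T]] .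
  then have "u \<in> carrier G"
    using u(1) \<sigma> l_coset_subset_G[OF _ w] by auto
  moreover have "fst \<sigma> = u <#\<^bsub>G\<^esub> generate G (snd \<sigma>)"
    using u(1) \<sigma> l_repr_independence[OF _ w subgroup_generate_spherical[OF T]] by simp
  ultimately show ?thesis
    using u by blast
qed

lemma davis_vertices_embedding:
  obtains index where "inj_on index (davis_vertices G S)"
    and "index ` davis_vertices G S \<subseteq> spherical G S \<times> carrier G"
    and "\<And>\<sigma>. \<sigma> \<in> davis_vertices G S \<Longrightarrow> d (snd (index \<sigma>)) = vertex_len G S \<sigma>"
proof -
  define rep where "rep \<sigma> = (SOME u. u \<in> carrier G \<and> fst \<sigma> = u <#\<^bsub>G\<^esub> generate G (snd \<sigma>) \<and>
      d u = vertex_len G S \<sigma>)" for \<sigma>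
  have rep: "rep \<sigma> \<in> carrier G \<and> fst \<sigma> = rep \<sigma> <#\<^bsub>G\<^esub> generate G (snd \<sigma>) \<and>
      d (rep \<sigma>) = vertex_len G S \<sigma>" if "\<sigma> \<in> davis_vertices G S" for \<sigma>
    unfolding rep_def by (rule someI_ex) (use davis_vertex_min_rep[OF that] in blast)
  have inj: "inj_on (\<lambda>\<sigma>. (snd \<sigma>, rep \<sigma>)) (davis_vertices G S)"
  proof (rule inj_onI)
    fix \<sigma> \<tau> assume "\<sigma> \<in> davis_vertices G S" "\<tau> \<in> davis_vertices G S"
      and "(snd \<sigma>, rep \<sigma>) = (snd \<tau>, rep \<tau>)"
    moreover from this have "fst \<sigma> = fst \<tau>"
      using rep by simp
    ultimately show "\<sigma> = \<tau>"
      by (simp add: prod_eq_iff)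
  qed
  have "(\<lambda>\<sigma>. (snd \<sigma>, rep \<sigma>)) ` davis_vertices G S \<subseteq> spherical G S \<times> carrier G"
    using rep by (auto simp: davis_vertices_iff)
  moreover have "d (snd (snd \<sigma>, rep \<sigma>)) = vertex_len G S \<sigma>" if "\<sigma> \<in> davis_vertices G S" for \<sigma>
    using rep[OF that] by simp
  ultimately show ?thesis
    by (rule that[OF inj])
qed

lemma summable_on_vertex_weight_iff:
  fixes t :: real
  shows "(\<lambda>\<sigma>. t ^ vertex_len G S \<sigma>) summable_on davis_vertices G S \<longleftrightarrow>
    (\<lambda>w. t ^ d w) summable_on carrier G"
proof
  assume summable: "(\<lambda>\<sigma>. t ^ vertex_len G S \<sigma>) summable_on davis_vertices G S"
  have "(\<lambda>w. ({w}, {})) ` carrier G \<subseteq> davis_vertices G S"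
    using spherical_empty by (force simp: davis_vertices_iff l_coset_generate_empty)
  with summable have "(\<lambda>\<sigma>. t ^ vertex_len G S \<sigma>) summable_on (\<lambda>w. ({w}, {})) ` carrier G"
    by (rule summable_on_subset_banach)
  then show "(\<lambda>w. t ^ d w) summable_on carrier G"
    by (subst (asm) summable_on_reindex) (auto simp: inj_on_def o_def vertex_len_chamber cong: summable_on_cong)
next
  assume summable: "(\<lambda>w. t ^ d w) summable_on carrier G"
  obtain index where inj: "inj_on index (davis_vertices G S)"
    and into: "index ` davis_vertices G S \<subseteq> spherical G S \<times> carrier G"
    and len: "\<And>\<sigma>. \<sigma> \<in> davis_vertices G S \<Longrightarrow> d (snd (index \<sigma>)) = vertex_len G S \<sigma>"
    by (rule davis_vertices_embedding) blast
  have "(\<lambda>p. t ^ d (snd p)) summable_on spherical G S \<times> carrier G"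
    using has_sum_Times_finite[OF finite_spherical, where h = "\<lambda>p. t ^ d (snd p)"
        and g = "\<lambda>_. infsum (\<lambda>w. t ^ d w) (carrier G)" and B = "carrier G"] summable
    by (auto intro: has_sum_imp_summable)
  then have "(\<lambda>p. t ^ d (snd p)) summable_on index ` davis_vertices G S"
    using into by (rule summable_on_subset_banach)
  then show "(\<lambda>\<sigma>. t ^ vertex_len G S \<sigma>) summable_on davis_vertices G S"
    using inj by (subst (asm) summable_on_reindex) (auto simp: o_def len cong: summable_on_cong)
qed

lemma const_cochain0_in_wl2_iff:
  fixes t :: real
  shows "const_cochain0 G S c \<in> wl2 (davis_vertices G S) (cochain0_weight G S t) \<longleftrightarrow>
    c = 0 \<or> (\<lambda>w. t ^ d w) summable_on carrier G"
proof -
  have "const_cochain0 G S c \<in> wl2 (davis_vertices G S) (cochain0_weight G S t) \<longleftrightarrow>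
      (\<lambda>\<sigma>. (cmod c)\<^sup>2 * t ^ vertex_len G S \<sigma>) summable_on davis_vertices G S"
    unfolding wl2_def cochain0_weight_def const_cochain0_def
    by (auto intro: summable_on_cong[THEN iffD1, rotated])
  also have "\<dots> \<longleftrightarrow> c = 0 \<or> (\<lambda>\<sigma>. t ^ vertex_len G S \<sigma>) summable_on davis_vertices G S"
    by (cases "c = 0") (auto simp: summable_on_cmult_right')
  finally show ?thesis
    by (simp add: summable_on_vertex_weight_iff)
qed

lemma coboundary0_const_cochain0:
  assumes "e \<in> davis_edges G S"
  shows "coboundary0 (const_cochain0 G S c) e = 0"
proof -
  have "fst e \<in> davis_vertices G S" "snd e \<in> davis_vertices G S"
    using assms unfolding davis_edges_def davis_vertices_iff by auto
  then show ?thesis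
    by (simp add: coboundary0_def const_cochain0_def)
qed

lemma harmonic0_eq:
  fixes t :: real
  shows "harmonic0 G S t = const_cochain0 G S ` {c. c = 0 \<or> (\<lambda>w. t ^ d w) summable_on carrier G}"
proof
  show "harmonic0 G S t \<subseteq> const_cochain0 G S ` {c. c = 0 \<or> (\<lambda>w. t ^ d w) summable_on carrier G}"
  proof
    fix f assume f: "f \<in> harmonic0 G S t"
    then have const: "f = const_cochain0 G S (f ({\<one>}, {}))"
      by (rule harmonic0_const)
    have "f \<in> wl2 (davis_vertices G S) (cochain0_weight G S t)"
      using f by (simp add: harmonic0_def)
    then have "const_cochain0 G S (f ({\<one>}, {})) \<in> wl2 (davis_vertices G S) (cochain0_weight G S t)"
      by (simp only: const[symmetric])
    then have "f ({\<one>}, {}) \<in> {c. c = 0 \<or> (\<lambda>w. t ^ d w) summable_on carrier G}"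
      by (simp add: const_cochain0_in_wl2_iff)
    with const show "f \<in> const_cochain0 G S ` {c. c = 0 \<or> (\<lambda>w. t ^ d w) summable_on carrier G}"
      by (rule image_eqI)
  qed
  show "const_cochain0 G S ` {c. c = 0 \<or> (\<lambda>w. t ^ d w) summable_on carrier G} \<subseteq> harmonic0 G S t"
    by (auto simp: harmonic0_def const_cochain0_in_wl2_iff coboundary0_const_cochain0)
qed

end

section \<open>The zeroth weighted \<open>L\<^sup>2\<close>-Betti number\<close>

definition Phi0_one :: "('a, 'b) monoid_scheme \<Rightarrow> 'a set \<Rightarrow> real \<Rightarrow> 'a set \<times> 'a \<Rightarrow> complex" where
  "Phi0_one G S t = (\<lambda>(T, w). if T \<in> spherical G S \<and> w \<in> carrier G
      then of_real (sub_growth G S T t powr (-1/2)) else 0)"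

context involution_generated_group
begin

lemma Phi0_const_cochain0: "Phi0 G S t (const_cochain0 G S c) = (\<lambda>i. c * Phi0_one G S t i)"
proof
  fix i :: "'a set \<times> 'a"
  obtain T w where i: "i = (T, w)"
    by (cases i)
  have "(w <#\<^bsub>G\<^esub> generate G T, T) \<in> davis_vertices G S"
    if "T \<in> spherical G S" "w \<in> carrier G"
    using that davis_vertices_iff by blast
  then show "Phi0 G S t (const_cochain0 G S c) i = c * Phi0_one G S t i"
    by (auto simp: i Phi0_def Phi0_one_def const_cochain0_def)
qed

lemma sub_growth_empty: "sub_growth G S {} t = 1"
  by (simp add: sub_growth_def generate_empty)

lemma has_sum_unit_vec:
  assumes "T \<in> spherical G S"
  shows "((\<lambda>i. unit_vec G T i * f i) has_sum f (T, \<one>)) (target_index G S)"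
proof (rule has_sum_finite_neutralI[of "{(T, \<one>)}"])
  show "{(T, \<one>)} \<subseteq> target_index G S"
    using assms by (simp add: target_index_def)
  show "unit_vec G T i * f i = 0" if "i \<in> target_index G S - {(T, \<one>)}" for i
    using that by (cases i) (auto simp: unit_vec_def)
qed (simp_all add: unit_vec_def)

lemma has_sum_norm_Phi0_one:
  fixes t :: real
  assumes "(\<lambda>w. t ^ d w) summable_on carrier G"
  shows "((\<lambda>i. Phi0_one G S t i * cnj (Phi0_one G S t i) * of_real (target_weight G S t i)) has_sum
    of_real ((\<Sum>T\<in>spherical G S. (sub_growth G S T t powr (-1/2))\<^sup>2) * growth_series G S t))
    (target_index G S)"
proof -
  have "((\<lambda>p. (sub_growth G S (fst p) t powr (-1/2))\<^sup>2 * t ^ d (snd p)) has_sum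
      (\<Sum>T\<in>spherical G S. (sub_growth G S T t powr (-1/2))\<^sup>2 * growth_series G S t))
      (spherical G S \<times> carrier G)"
  proof (rule has_sum_Times_finite[OF finite_spherical])
    have "((\<lambda>w. t ^ d w) has_sum growth_series G S t) (carrier G)"
      using assms(1) unfolding growth_series_def by (rule has_sum_infsum)
    then show "((\<lambda>w. (sub_growth G S (fst (T, w)) t powr (-1/2))\<^sup>2 * t ^ d (snd (T, w))) has_sum
        (sub_growth G S T t powr (-1/2))\<^sup>2 * growth_series G S t) (carrier G)" for T
      using has_sum_cmult_right by simp
  qed
  from has_sum_of_real[OF this] show ?thesis
    unfolding target_index_def sum_distrib_right[symmetric]
    by (rule has_sum_cong[THEN iffD1, rotated])
      (auto simp: Phi0_one_def target_weight_def power2_eq_square)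
qed

lemma has_sum_unit_vec_Phi0_one:
  assumes "T \<in> spherical G S"
  shows "((\<lambda>i. unit_vec G T i * cnj (Phi0_one G S t i) * of_real (target_weight G S t i)) has_sum
    of_real (sub_growth G S T t powr (-1/2))) (target_index G S)"
  using has_sum_unit_vec[OF assms, of "\<lambda>i. cnj (Phi0_one G S t i) * of_real (target_weight G S t i)"] assms
  by (simp add: mult.assoc Phi0_one_def target_weight_def)

lemma winner_Phi0_one_unit_vec:
  assumes "T \<in> spherical G S"
  shows "winner (target_index G S) (target_weight G S t) (\<lambda>i. c * Phi0_one G S t i) (unit_vec G T) =
    c * of_real (sub_growth G S T t powr (-1/2))"
proof -
  have "((\<lambda>i. unit_vec G T i * (c * Phi0_one G S t i * of_real (target_weight G S t i))) has_sum
      c * of_real (sub_growth G S T t powr (-1/2))) (target_index G S)"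
    using has_sum_unit_vec[OF assms, of "\<lambda>i. c * Phi0_one G S t i * of_real (target_weight G S t i)"] assms
    by (simp add: Phi0_one_def target_weight_def)
  then have "((\<lambda>i. c * Phi0_one G S t i * cnj (unit_vec G T i) * of_real (target_weight G S t i)) has_sum
      c * of_real (sub_growth G S T t powr (-1/2))) (target_index G S)"
    by (rule has_sum_cong[THEN iffD1, rotated]) (auto simp: unit_vec_def split: if_splits)
  then show ?thesis
    unfolding winner_def by (rule infsumI)
qed

lemma betti0_summable:
  fixes t :: real
  assumes "0 \<le> t" and summable: "(\<lambda>w. t ^ d w) summable_on carrier G"
  shows "betti0 G S t = of_real (1 / growth_series G S t)"
proof -
  define I \<mu> where "I = target_index G S" and "\<mu> = target_weight G S t"
  define v where "v = Phi0_one G S t"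
  define \<gamma> where "\<gamma> T = sub_growth G S T t powr (-1/2)" for T
  define N where "N = (\<Sum>T\<in>spherical G S. (\<gamma> T)\<^sup>2) * growth_series G S t"
  have "(\<gamma> {})\<^sup>2 \<le> (\<Sum>T\<in>spherical G S. (\<gamma> T)\<^sup>2)"
    using finite_spherical spherical_empty by (intro member_le_sum) auto
  then have norms_pos: "0 < (\<Sum>T\<in>spherical G S. (\<gamma> T)\<^sup>2)"
    by (simp add: \<gamma>_def sub_growth_empty)
  then have "0 < N"
    using growth_series_ge_one[OF assms] by (simp add: N_def)
  have image: "Phi0 G S t ` harmonic0 G S t = range (\<lambda>c i. c * v i)"
    using summable by (simp add: harmonic0_eq image_image Phi0_const_cochain0 v_def)
  have "betti0 G S t = (\<Sum>T\<in>spherical G S. of_real (\<gamma> T) / of_real N * of_real (\<gamma> T))"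
    unfolding betti0_def image I_def[symmetric] \<mu>_def[symmetric]
  proof (rule sum.cong[OF HOL.refl])
    fix T assume T: "T \<in> spherical G S"
    have "orth_proj I \<mu> (range (\<lambda>c i. c * v i)) (unit_vec G T) = (\<lambda>i. of_real (\<gamma> T) / of_real N * v i)"
    proof (rule orth_proj_line)
      show "((\<lambda>i. unit_vec G T i * cnj (v i) * of_real (\<mu> i)) has_sum of_real (\<gamma> T)) I"
        unfolding I_def \<mu>_def v_def \<gamma>_def by (rule has_sum_unit_vec_Phi0_one[OF T])
      show "((\<lambda>i. v i * cnj (v i) * of_real (\<mu> i)) has_sum of_real N) I"
        unfolding I_def \<mu>_def v_def \<gamma>_def N_def by (rule has_sum_norm_Phi0_one[OF summable])
      show "complex_of_real N \<noteq> 0"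
        using \<open>0 < N\<close> by simp
    qed
    then show "winner I \<mu> (orth_proj I \<mu> (range (\<lambda>c i. c * v i)) (unit_vec G T)) (unit_vec G T) =
        of_real (\<gamma> T) / of_real N * of_real (\<gamma> T)"
      using winner_Phi0_one_unit_vec[OF T, of t "of_real (\<gamma> T) / of_real N"]
      by (simp add: I_def \<mu>_def v_def \<gamma>_def)
  qed
  also have "\<dots> = of_real ((\<Sum>T\<in>spherical G S. (\<gamma> T)\<^sup>2) / N)"
    by (simp add: sum_divide_distrib power2_eq_square)
  also have "\<dots> = of_real (1 / growth_series G S t)"
    using norms_pos by (simp add: N_def)
  finally show ?thesis .
qed

lemma betti0_not_summable:
  fixes t :: real
  assumes "\<not> (\<lambda>w. t ^ d w) summable_on carrier G"
  shows "betti0 G S t = 0"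
proof -
  have "Phi0 G S t ` harmonic0 G S t = {\<lambda>i. 0}"
    using assms by (simp add: harmonic0_eq Phi0_const_cochain0)
  then show ?thesis
    by (simp add: betti0_def orth_proj_zero_space winner_def)
qed

end

lemma coxeter_system_involution_generated:
  "coxeter_system G S \<Longrightarrow> involution_generated_group G S"
  unfolding coxeter_system_def involution_generated_group_def involution_generated_group_axioms_def
  by auto

theorem theorem7p1:
  fixes G :: "('a, 'b) monoid_scheme" and S :: "'a set" and t :: real
  assumes "coxeter_system G S" and "0 < t"
  shows "(ereal t < growth_radius G S \<longrightarrow>
            betti0 G S t = complex_of_real (1 / growth_series G S t)) \<and>
         (growth_radius G S \<le> ereal t \<longrightarrow> betti0 G S t = 0)"
proof -
  interpret involution_generated_group G S
    using assms(1) by (rule coxeter_system_involution_generated)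
  have "(\<lambda>w. t ^ word_len G S w) summable_on carrier G \<longleftrightarrow> ereal t < growth_radius G S"
    using assms(2) by (rule summable_on_growth_iff_less_radius)
  then show ?thesis
    using betti0_summable[of t] betti0_not_summable[of t] assms(2) by (auto simp: not_less[symmetric])
qed

end
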